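(* Let $\mathfrak{A}$ be an atomic weakly associative relation algebra and let $\mathfrak{B}=\langle B,T_\kappa,E_{\kappa\lambda}\rangle_{\kappa,\lambda<3}$ be its suitable structure. Then $\mathfrak{Cm}\,\mathfrak{B}\in\mathsf{NA}_3$, i.e., $\mathfrak{Cm}\,\mathfrak{B}$ is a non-commutative 3-dimensional cylindric algebra.
   Context: WA: algebras $\langle A,+,\overline{\phantom{x}},;,\breve{\phantom{x}},1'\rangle$ with $x\cdot y=\overline{\overline{x}+\overline{y}}$, $0'=\overline{1'}$, $1=1'+0'$, $0=\overline{1}$, satisfying for all $x,y,z$: $x+y=y+x$; $x+(y+z)=(x+y)+z$; $\overline{\overline{x}+\overline{y}}+\overline{\overline{x}+y}=x$; $((x\cdot 1');1);1=(x\cdot1');1$; $(x+y);z=x;z+y;z$; $x;1'=x$; $\breve{\breve{x}}=x$; $\breve{(x+y)}=\breve{x}+\breve{y}$; $\breve{(x;y)}=\breve{y};\breve{x}$; $\breve{x};\overline{x;y}+\overline{y}=\overline{y}$. Suitable structure of $\mathfrak{A}$: $B=\{s\in{}^3\mathrm{At}(\mathfrak{A}): s_2;s_0\ge s_1\}$; $T_\kappa=\{\langle s,t\rangle\in B\times B:s_\kappa=t_\kappa\}$; $E_{\kappa\kappa}=B$; for distinct $\kappa,\lambda$ with third index $\mu$, $E_{\kappa\lambda}=\{s\in B:s_\mu\le1'\}$. Complex algebra $\mathfrak{Cm}\,\mathfrak{B}=\langle\mathcal{P}(B),\cup,\cap,B\setminus\cdot,\emptyset,B,T_\kappa^*,E_{\kappa\lambda}\rangle_{\kappa,\lambda<3}$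 with cylindrifications $c_\kappa=T_\kappa^*$, $T_\kappa^*(X)=\{y\in B:\exists x\in X\ \langle y,x\rangle\in T_\kappa\}$, and diagonals $d_{\kappa\lambda}=E_{\kappa\lambda}$. $\mathsf{NA}_3$ is the class of algebras $\langle C,+,\cdot,-,0,1,c_\kappa,d_{\kappa\lambda}\rangle_{\kappa,\lambda<3}$ such that: (C0) the Boolean reduct is a Boolean algebra; (C1) $c_\kappa0=0$; (C2) $x\le c_\kappa x$; (C3) $c_\kappa(x\cdot c_\kappa y)=c_\kappa x\cdot c_\kappa y$; (C4$^*$) $c_\kappa c_\lambda x\ge c_\lambda c_\kappa x\cdot d_{\lambda\mu}$ whenever $\mu\ne\kappa,\lambda$; (C5) $d_{\kappa\kappa}=1$; (C6) $d_{\kappa\mu}=c_\lambda(d_{\kappa\lambda}\cdot d_{\lambda\mu})$ whenever $\lambda\ne\kappa,\mu$; (C7) $c_\kappa(d_{\kappa\lambda}\cdot x)\cdot c_\kappa(d_{\kappa\lambda}\cdot -x)=0$ whenever $\kappa\ne\lambda$. *)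

theory Defs
  imports Main
begin

text \<open>A relation-type algebra is given on the whole type 'a by operations
  p (join +), n (complement), m (relative product ;), v (converse), e (identity 1').\<close>

definition ra_meet :: "('a\<Rightarrow>'a\<Rightarrow>'a) \<Rightarrow> ('a\<Rightarrow>'a) \<Rightarrow> 'a \<Rightarrow> 'a \<Rightarrow> 'a" where
  "ra_meet p n x y = n (p (n x) (n y))"

definition ra_top :: "('a\<Rightarrow>'a\<Rightarrow>'a) \<Rightarrow> ('a\<Rightarrow>'a) \<Rightarrow> 'a \<Rightarrow> 'a" where
  "ra_top p n e = p e (n e)"

definition ra_bot :: "('a\<Rightarrow>'a\<Rightarrow>'a) \<Rightarrow> ('a\<Rightarrow>'a) \<Rightarrow> 'a \<Rightarrow> 'a" where
  "ra_bot p n e = n (ra_top p n e)"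

definition ra_le :: "('a\<Rightarrow>'a\<Rightarrow>'a) \<Rightarrow> 'a \<Rightarrow> 'a \<Rightarrow> bool" where
  "ra_le p x y \<longleftrightarrow> p x y = y"

definition WA :: "('a\<Rightarrow>'a\<Rightarrow>'a) \<Rightarrow> ('a\<Rightarrow>'a) \<Rightarrow> ('a\<Rightarrow>'a\<Rightarrow>'a) \<Rightarrow> ('a\<Rightarrow>'a) \<Rightarrow> 'a \<Rightarrow> bool" where
  "WA p n m v e \<longleftrightarrow>
     (\<forall>x y. p x y = p y x) \<and>
     (\<forall>x y z. p x (p y z) = p (p x y) z) \<and>
     (\<forall>x y. p (n (p (n x) (n y))) (n (p (n x) y)) = x) \<and>
     (\<forall>x. m (m (ra_meet p n x e) (ra_top p n e)) (ra_top p n e)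
          = m (ra_meet p n x e) (ra_top p n e)) \<and>
     (\<forall>x y z. m (p x y) z = p (m x z) (m y z)) \<and>
     (\<forall>x. m x e = x) \<and>
     (\<forall>x. v (v x) = x) \<and>
     (\<forall>x y. v (p x y) = p (v x) (v y)) \<and>
     (\<forall>x y. v (m x y) = m (v y) (v x)) \<and>
     (\<forall>x y. p (m (v x) (n (m x y))) (n y) = n y)"

definition ra_atom :: "('a\<Rightarrow>'a\<Rightarrow>'a) \<Rightarrow> ('a\<Rightarrow>'a) \<Rightarrow> 'a \<Rightarrow> 'a \<Rightarrow> bool" where
  "ra_atom p n e a \<longleftrightarrow> a \<noteq> ra_bot p n e \<and>
     (\<forall>b. ra_le p b a \<longrightarrow> b = ra_bot p n e \<or> b = a)"

definition ra_atomic :: "('a\<Rightarrow>'a\<Rightarrow>'a) \<Rightarrow> ('a\<Rightarrow>'a) \<Rightarrow> 'a \<Rightarrow> bool" where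
  "ra_atomic p n e \<longleftrightarrow>
     (\<forall>x. x \<noteq> ra_bot p n e \<longrightarrow> (\<exists>a. ra_atom p n e a \<and> ra_le p a x))"

definition sel :: "'a \<times> 'a \<times> 'a \<Rightarrow> nat \<Rightarrow> 'a" where
  "sel s k = (if k = 0 then fst s else if k = 1 then fst (snd s) else snd (snd s))"

definition suitB :: "('a\<Rightarrow>'a\<Rightarrow>'a) \<Rightarrow> ('a\<Rightarrow>'a) \<Rightarrow> ('a\<Rightarrow>'a\<Rightarrow>'a) \<Rightarrow> 'a \<Rightarrow> ('a \<times> 'a \<times> 'a) set" where
  "suitB p n m e = {s. (\<forall>k<3. ra_atom p n e (sel s k)) \<and> ra_le p (sel s 1) (m (sel s 2) (sel s 0))}"

definition suitT :: "('a\<Rightarrow>'a\<Rightarrow>'a) \<Rightarrow> ('a\<Rightarrow>'a) \<Rightarrow> ('a\<Rightarrow>'a\<Rightarrow>'a) \<Rightarrow> 'a \<Rightarrow> nat \<Rightarrow> (('a \<times> 'a \<times> 'a) \<times> ('a \<times> 'a \<times> 'a)) set" where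
  "suitT p n m e k = {(s, t). s \<in> suitB p n m e \<and> t \<in> suitB p n m e \<and> sel s k = sel t k}"

definition suitE :: "('a\<Rightarrow>'a\<Rightarrow>'a) \<Rightarrow> ('a\<Rightarrow>'a) \<Rightarrow> ('a\<Rightarrow>'a\<Rightarrow>'a) \<Rightarrow> 'a \<Rightarrow> nat \<Rightarrow> nat \<Rightarrow> ('a \<times> 'a \<times> 'a) set" where
  "suitE p n m e k l = (if k = l then suitB p n m e
      else {s \<in> suitB p n m e. ra_le p (sel s (3 - k - l)) e})"

definition Tstar :: "'b set \<Rightarrow> ('b \<times> 'b) set \<Rightarrow> 'b set \<Rightarrow> 'b set" where
  "Tstar B T X = {y \<in> B. \<exists>x\<in>X. (y, x) \<in> T}"

definition bool_alg :: "'b set \<Rightarrow> ('b\<Rightarrow>'b\<Rightarrow>'b) \<Rightarrow> ('b\<Rightarrow>'b\<Rightarrow>'b) \<Rightarrow> ('b\<Rightarrow>'b) \<Rightarrow> 'b \<Rightarrow> 'b \<Rightarrow> bool" where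
  "bool_alg C pl tm ng z u \<longleftrightarrow>
     z \<in> C \<and> u \<in> C \<and>
     (\<forall>x\<in>C. \<forall>y\<in>C. pl x y \<in> C \<and> tm x y \<in> C) \<and> (\<forall>x\<in>C. ng x \<in> C) \<and>
     (\<forall>x\<in>C. \<forall>y\<in>C. pl x y = pl y x \<and> tm x y = tm y x) \<and>
     (\<forall>x\<in>C. \<forall>y\<in>C. \<forall>w\<in>C. pl x (pl y w) = pl (pl x y) w \<and> tm x (tm y w) = tm (tm x y) w) \<and>
     (\<forall>x\<in>C. \<forall>y\<in>C. pl x (tm x y) = x \<and> tm x (pl x y) = x) \<and>
     (\<forall>x\<in>C. \<forall>y\<in>C. \<forall>w\<in>C. tm x (pl y w) = pl (tm x y) (tm x w) \<and> pl x (tm y w) = tm (pl x y) (pl x w)) \<and>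
     (\<forall>x\<in>C. pl x (ng x) = u \<and> tm x (ng x) = z)"

text \<open>NA_3: indices range over {0,1,2}; x <= y means x * y = x.\<close>
definition NA3 :: "'b set \<Rightarrow> ('b\<Rightarrow>'b\<Rightarrow>'b) \<Rightarrow> ('b\<Rightarrow>'b\<Rightarrow>'b) \<Rightarrow> ('b\<Rightarrow>'b) \<Rightarrow> 'b \<Rightarrow> 'b
    \<Rightarrow> (nat \<Rightarrow> 'b \<Rightarrow> 'b) \<Rightarrow> (nat \<Rightarrow> nat \<Rightarrow> 'b) \<Rightarrow> bool" where
  "NA3 C pl tm ng z u c d \<longleftrightarrow>
     bool_alg C pl tm ng z u \<and>
     (\<forall>k<3. \<forall>x\<in>C. c k x \<in> C) \<and> (\<forall>k<3. \<forall>l<3. d k l \<in> C) \<and>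
     (\<forall>k<3. c k z = z) \<and>
     (\<forall>k<3. \<forall>x\<in>C. tm x (c k x) = x) \<and>
     (\<forall>k<3. \<forall>x\<in>C. \<forall>y\<in>C. c k (tm x (c k y)) = tm (c k x) (c k y)) \<and>
     (\<forall>k<3. \<forall>l<3. \<forall>\<mu><3. \<mu> \<noteq> k \<and> \<mu> \<noteq> l \<longrightarrow>
        (\<forall>x\<in>C. tm (tm (c l (c k x)) (d l \<mu>)) (c k (c l x)) = tm (c l (c k x)) (d l \<mu>))) \<and>
     (\<forall>k<3. d k k = u) \<and>
     (\<forall>k<3. \<forall>l<3. \<forall>\<mu><3. l \<noteq> k \<and> l \<noteq> \<mu> \<longrightarrow> d k \<mu> = c l (tm (d k l) (d l \<mu>))) \<and>
     (\<forall>k<3. \<forall>l<3. k \<noteq> l \<longrightarrow>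
        (\<forall>x\<in>C. tm (c k (tm (d k l) x)) (c k (tm (d k l) (ng x))) = z))"


end

theory Submission
  imports Defs
begin

(* A triple s in B is a triangle on the vertices 0, 1, 2 whose edge opposite vertex k is
   labelled by the atom s_k, where s_2;s_0 >= s_1 says that the labels compose.
   Cylindrification c_k moves vertex k keeping the opposite edge, and d_kl says that the
   edge between k and l is an identity atom.  C1-C3 hold for any cylindrification given
   by the kernel of a map on B.  For C4, C6 and C7 the key fact is that in an atomic WA
   every atom a has a unique identity atom i with a <= a;i, its range, and dually a
   domain: uniqueness needs ((x.1');1);1 = (x.1');1, which makes (1;i);j vanish for distinct
   identity atoms i, j.  Edges of a triangle then carry the same identity atom at each
   common vertex, so a triangle with one identity edge is degenerate and is determined by
   any one of its other edges. *)

locale huntington_algebra =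
  fixes join :: "'a \<Rightarrow> 'a \<Rightarrow> 'a" (infixl "\<squnion>" 65) and compl :: "'a \<Rightarrow> 'a"
  assumes join_commute: "x \<squnion> y = y \<squnion> x"
    and join_assoc: "x \<squnion> (y \<squnion> z) = (x \<squnion> y) \<squnion> z"
    and huntington: "compl (compl x \<squnion> compl y) \<squnion> compl (compl x \<squnion> y) = x"
begin

lemma join_left_commute: "x \<squnion> (y \<squnion> z) = y \<squnion> (x \<squnion> z)"
  by (metis join_assoc join_commute)

lemma compl_compl: "compl (compl x) = x"
  by (smt (verit) huntington join_commute join_left_commute)

lemma huntington_compl: "compl (x \<squnion> y) \<squnion> compl (x \<squnion> compl y) = compl x"
  by (metis compl_compl huntington)

lemma join_compl_eq: "x \<squnion> compl x = y \<squnion> compl y"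
  by (smt (verit) huntington huntington_compl join_commute join_left_commute)

lemma join_idem: "x \<squnion> x = x"
  by (smt (verit) compl_compl huntington join_commute join_compl_eq join_left_commute)

lemma join_join_compl: "x \<squnion> (y \<squnion> compl y) = y \<squnion> compl y"
  by (metis join_assoc join_compl_eq join_idem)

lemma join_compl_join_compl: "x \<squnion> compl (y \<squnion> compl y) = x"
  by (metis compl_compl huntington join_compl_eq join_commute join_idem)

end

definition kernel_on :: "'b set \<Rightarrow> ('b \<Rightarrow> 'c) \<Rightarrow> ('b \<times> 'b) set" where
  "kernel_on B f = {(s, t). s \<in> B \<and> t \<in> B \<and> f s = f t}"

lemma Tstar_kernel_on_iff:
  "y \<in> Tstar B (kernel_on B f) X \<longleftrightarrow> y \<in> B \<and> (\<exists>x\<in>X \<inter> B. f y = f x)"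
  unfolding Tstar_def kernel_on_def by auto

lemma Tstar_empty: "Tstar B T {} = {}"
  unfolding Tstar_def by simp

lemma Tstar_subset: "Tstar B T X \<subseteq> B"
  unfolding Tstar_def by auto

lemma subset_Tstar_kernel_on: "X \<subseteq> B \<Longrightarrow> X \<subseteq> Tstar B (kernel_on B f) X"
  unfolding subset_iff Tstar_kernel_on_iff by blast

lemma Tstar_kernel_on_Int:
  "Tstar B (kernel_on B f) (X \<inter> Tstar B (kernel_on B f) Y)
     = Tstar B (kernel_on B f) X \<inter> Tstar B (kernel_on B f) Y"
  (is "?C (X \<inter> ?C Y) = ?C X \<inter> ?C Y")
proof (intro equalityI subsetI)
  fix y assume "y \<in> ?C (X \<inter> ?C Y)"
  then obtain x where x: "y \<in> B" "x \<in> X" "x \<in> ?C Y" "x \<in> B" "f y = f x"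
    unfolding Tstar_kernel_on_iff[of y] by blast
  then obtain z where z: "z \<in> Y" "z \<in> B" "f x = f z"
    unfolding Tstar_kernel_on_iff[of x] by blast
  have "y \<in> ?C X"
    unfolding Tstar_kernel_on_iff using x by (intro conjI bexI[of _ x]) auto
  moreover have "y \<in> ?C Y"
    unfolding Tstar_kernel_on_iff using x z by (intro conjI bexI[of _ z]) auto
  ultimately show "y \<in> ?C X \<inter> ?C Y" ..
next
  fix y assume "y \<in> ?C X \<inter> ?C Y"
  then obtain x z where x: "y \<in> B" "x \<in> X" "x \<in> B" "f y = f x"
    and z: "z \<in> Y" "z \<in> B" "f y = f z"
    unfolding Int_iff Tstar_kernel_on_iff by auto
  have "x \<in> ?C Y"
    unfolding Tstar_kernel_on_iff using x z by (intro conjI bexI[of _ z]) auto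
  then show "y \<in> ?C (X \<inter> ?C Y)"
    unfolding Tstar_kernel_on_iff[of y] using x by (intro conjI bexI[of _ x]) auto
qed

lemma bool_alg_Pow: "bool_alg (Pow B) (\<union>) (\<inter>) (\<lambda>X. B - X) {} B"
  unfolding bool_alg_def by auto

lemma sel_simps [simp]:
  "sel (a, b, c) 0 = a" "sel (a, b, c) 1 = b" "sel (a, b, c) (Suc 0) = b" "sel (a, b, c) 2 = c"
  unfolding sel_def by simp_all

lemma sel_diagonal [simp]: "sel (a, a, a) k = a"
  unfolding sel_def by simp

lemma less_3_cases: "(k::nat) < 3 \<Longrightarrow> k = 0 \<or> k = 1 \<or> k = 2"
  by arith

locale atomic_wa =
  fixes p :: "'a \<Rightarrow> 'a \<Rightarrow> 'a" and n :: "'a \<Rightarrow> 'a" and m :: "'a \<Rightarrow> 'a \<Rightarrow> 'a"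
    and v :: "'a \<Rightarrow> 'a" and e :: 'a
  assumes WA: "WA p n m v e" and atomic: "ra_atomic p n e"
begin

abbreviation le (infix "\<preceq>" 50) where "x \<preceq> y \<equiv> ra_le p x y"
abbreviation meet (infixl "\<sqinter>" 70) where "x \<sqinter> y \<equiv> ra_meet p n x y"
abbreviation T where "T \<equiv> ra_top p n e"
abbreviation Z where "Z \<equiv> ra_bot p n e"
abbreviation atom where "atom a \<equiv> ra_atom p n e a"
abbreviation idatom where "idatom i \<equiv> atom i \<and> i \<preceq> e"

interpretation huntington_algebra p n
  using WA unfolding WA_def by unfold_locales blast+

declare compl_compl [simp] join_idem [simp]

lemma weak_assoc: "m (m (x \<sqinter> e) T) T = m (x \<sqinter> e) T" using WA unfolding WA_def by blast
lemma comp_join_distrib: "m (p x y) z = p (m x z) (m y z)" using WA unfolding WA_def by blast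
lemma comp_id [simp]: "m x e = x" using WA unfolding WA_def by blast
lemma conv_conv [simp]: "v (v x) = x" using WA unfolding WA_def by blast
lemma conv_join: "v (p x y) = p (v x) (v y)" using WA unfolding WA_def by blast
lemma conv_comp: "v (m x y) = m (v y) (v x)" using WA unfolding WA_def by blast
lemma conv_inject [simp]: "v x = v y \<longleftrightarrow> x = y" by (metis conv_conv)
lemma conv_comp_compl_le: "m (v x) (n (m x y)) \<preceq> n y" using WA unfolding WA_def ra_le_def by blast

lemma join_compl: "p x (n x) = T" unfolding ra_top_def by (rule join_compl_eq)
lemma join_top [simp]: "p x T = T" unfolding ra_top_def by (rule join_join_compl)
lemma join_bot [simp]: "p x Z = x" unfolding ra_bot_def ra_top_def by (rule join_compl_join_compl)
lemma compl_top: "n T = Z" unfolding ra_bot_def ..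

lemma le_refl [simp]: "x \<preceq> x" unfolding ra_le_def by simp
lemma le_trans [trans]: "x \<preceq> y \<Longrightarrow> y \<preceq> z \<Longrightarrow> x \<preceq> z" unfolding ra_le_def by (metis join_assoc)
lemma le_antisym: "x \<preceq> y \<Longrightarrow> y \<preceq> x \<Longrightarrow> x = y" unfolding ra_le_def by (metis join_commute)
lemma le_join: "x \<preceq> p x y" unfolding ra_le_def by (metis join_assoc join_idem)
lemma join_le: "x \<preceq> z \<Longrightarrow> y \<preceq> z \<Longrightarrow> p x y \<preceq> z" unfolding ra_le_def by (metis join_assoc)
lemma bot_join [simp]: "p Z x = x" by (metis join_bot join_commute)
lemma bot_le [simp]: "Z \<preceq> x" unfolding ra_le_def by simp
lemma le_top [simp]: "x \<preceq> T" unfolding ra_le_def by simp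
lemma le_bot_iff: "x \<preceq> Z \<longleftrightarrow> x = Z" using le_antisym bot_le by blast

lemma compl_antimono: "x \<preceq> y \<Longrightarrow> n y \<preceq> n x"
proof -
  assume "x \<preceq> y"
  then have y: "y = p x y" unfolding ra_le_def by simp
  have "p (n (p x y)) (n (p x (n y))) = n x" using huntington[of "n x" "n y"] by simp
  then have "p (n (p x y)) (n x) = n x" by (metis join_assoc join_idem)
  then show ?thesis using y unfolding ra_le_def by (metis join_commute)
qed

lemma meet_commute: "x \<sqinter> y = y \<sqinter> x" unfolding ra_meet_def by (metis join_commute)
lemma meet_le: "x \<sqinter> y \<preceq> x" unfolding ra_meet_def by (metis compl_antimono le_join compl_compl)
lemma meet_le': "x \<sqinter> y \<preceq> y" using meet_le meet_commute by metis
lemma le_meet: "z \<preceq> x \<Longrightarrow> z \<preceq> y \<Longrightarrow> z \<preceq> x \<sqinter> y"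
  unfolding ra_meet_def by (metis compl_antimono join_le compl_compl)
lemma meet_mono: "x \<preceq> y \<Longrightarrow> x \<sqinter> z \<preceq> y \<sqinter> z"
  by (meson le_trans le_meet meet_le meet_le')
lemma meet_top [simp]: "x \<sqinter> T = x" by (meson le_antisym le_refl le_top le_meet meet_le)
lemma meet_absorb: "x \<preceq> y \<Longrightarrow> x \<sqinter> y = x" by (meson le_antisym le_refl le_meet meet_le)
lemma meet_compl: "x \<sqinter> n x = Z" unfolding ra_meet_def by (metis join_compl compl_top)

lemma le_iff_meet_compl: "x \<preceq> y \<longleftrightarrow> x \<sqinter> n y = Z"
proof
  assume "x \<preceq> y"
  then have "x \<sqinter> n y \<preceq> y \<sqinter> n y" by (rule meet_mono)
  then show "x \<sqinter> n y = Z" by (simp add: meet_compl le_bot_iff)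
next
  assume "x \<sqinter> n y = Z"
  moreover have "x = p (x \<sqinter> y) (x \<sqinter> n y)" using huntington[of x y] unfolding ra_meet_def by simp
  ultimately have "x = x \<sqinter> y" by simp
  then show "x \<preceq> y" using meet_le' by metis
qed

lemma conv_mono: "x \<preceq> y \<Longrightarrow> v x \<preceq> v y" unfolding ra_le_def by (metis conv_join)
lemma conv_le_iff [simp]: "v x \<preceq> v y \<longleftrightarrow> x \<preceq> y" by (metis conv_mono conv_conv)
lemma comp_mono_left: "x \<preceq> y \<Longrightarrow> m x z \<preceq> m y z" unfolding ra_le_def by (metis comp_join_distrib)
lemma comp_join_distrib_left: "m z (p x y) = p (m z x) (m z y)"
proof -
  have "m z (p x y) = v (m (p (v x) (v y)) (v z))" by (simp add: conv_comp conv_join)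
  also have "\<dots> = p (m z x) (m z y)" by (simp add: comp_join_distrib conv_join conv_comp)
  finally show ?thesis .
qed
lemma comp_mono_right: "x \<preceq> y \<Longrightarrow> m z x \<preceq> m z y"
  unfolding ra_le_def by (metis comp_join_distrib_left)
lemma conv_id [simp]: "v e = e"
proof -
  have "e = v (m (v e) e)" by simp
  also have "\<dots> = m (v e) e" by (simp only: conv_comp conv_conv)
  also have "\<dots> = v e" by simp
  finally show ?thesis by (rule sym)
qed
lemma id_comp [simp]: "m e x = x"
proof -
  have "m e x = v (m (v x) e)" by (simp only: conv_comp conv_conv conv_id)
  then show ?thesis by simp
qed
lemma conv_bot [simp]: "v Z = Z"
proof -
  have "v Z \<preceq> v (v Z)" by (rule conv_mono) simp
  then show ?thesis by (simp add: le_bot_iff)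
qed
lemma conv_top [simp]: "v T = T"
proof -
  have "v (v T) \<preceq> v T" by (rule conv_mono) simp
  then show ?thesis by (simp add: le_antisym)
qed
lemma conv_eq_bot_iff [simp]: "v x = Z \<longleftrightarrow> x = Z" by (metis conv_bot conv_conv)
lemma conv_meet: "v (x \<sqinter> y) = v x \<sqinter> v y"
proof (rule le_antisym)
  show "v (x \<sqinter> y) \<preceq> v x \<sqinter> v y" by (simp add: le_meet meet_le meet_le' conv_mono)
  have "v (v x \<sqinter> v y) \<preceq> x \<sqinter> y" by (metis le_meet meet_le meet_le' conv_mono conv_conv)
  then show "v x \<sqinter> v y \<preceq> v (x \<sqinter> y)" by (metis conv_mono conv_conv)
qed

lemma schroeder_conv_left: "m x y \<sqinter> z = Z \<longleftrightarrow> m (v x) z \<sqinter> y = Z"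
proof -
  have *: "m x y \<sqinter> z = Z \<Longrightarrow> m (v x) z \<sqinter> y = Z" for x y z
  proof -
    assume "m x y \<sqinter> z = Z"
    then have "z \<preceq> n (m x y)" by (metis le_iff_meet_compl meet_commute compl_compl)
    then have "m (v x) z \<preceq> n y" using conv_comp_compl_le comp_mono_right le_trans by blast
    then show ?thesis by (metis le_iff_meet_compl compl_compl)
  qed
  show ?thesis using *[of x y z] *[of "v x" z y] by auto
qed

lemma schroeder_conv_right: "m x y \<sqinter> z = Z \<longleftrightarrow> m z (v y) \<sqinter> x = Z"
proof -
  have "m x y \<sqinter> z = Z \<longleftrightarrow> v (m x y \<sqinter> z) = v Z" by (metis conv_conv)
  also have "\<dots> \<longleftrightarrow> m (v y) (v x) \<sqinter> v z = Z" by (simp add: conv_meet conv_comp)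
  also have "\<dots> \<longleftrightarrow> m y (v z) \<sqinter> v x = Z" by (metis schroeder_conv_left)
  also have "\<dots> \<longleftrightarrow> v (m y (v z) \<sqinter> v x) = v Z" by (metis conv_conv)
  also have "\<dots> \<longleftrightarrow> m z (v y) \<sqinter> x = Z" by (simp add: conv_meet conv_comp)
  finally show ?thesis .
qed

lemma atom_neq_bot: "atom a \<Longrightarrow> a \<noteq> Z" unfolding ra_atom_def by blast
lemma atom_eqI: "atom a \<Longrightarrow> atom b \<Longrightarrow> a \<preceq> b \<Longrightarrow> a = b"
  unfolding ra_atom_def by blast
lemma atom_le_iff: "atom a \<Longrightarrow> a \<preceq> x \<longleftrightarrow> x \<sqinter> a \<noteq> Z"
proof
  assume "atom a" "a \<preceq> x"
  then have "a \<preceq> x \<sqinter> a" by (simp add: le_meet)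
  then show "x \<sqinter> a \<noteq> Z" using \<open>atom a\<close> atom_neq_bot le_bot_iff by metis
next
  assume "atom a" "x \<sqinter> a \<noteq> Z"
  then have "x \<sqinter> a = a" using meet_le' unfolding ra_atom_def by blast
  then show "a \<preceq> x" using meet_le by metis
qed
lemma atom_below: "x \<noteq> Z \<Longrightarrow> \<exists>a. atom a \<and> a \<preceq> x"
  using atomic unfolding ra_atomic_def by blast
lemma conv_atom: "atom a \<Longrightarrow> atom (v a)"
  unfolding ra_atom_def by (metis conv_eq_bot_iff conv_le_iff conv_conv)

lemma atom_le_comp_conv_left: "atom a \<Longrightarrow> atom b \<Longrightarrow> atom c \<Longrightarrow> b \<preceq> m c a \<longleftrightarrow> a \<preceq> m (v c) b"
  by (metis atom_le_iff schroeder_conv_left)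

lemma atom_le_comp_conv_right: "atom a \<Longrightarrow> atom b \<Longrightarrow> atom c \<Longrightarrow> b \<preceq> m c a \<longleftrightarrow> c \<preceq> m b (v a)"
  by (metis atom_le_iff schroeder_conv_right)

lemma comp_le_of_le_id: "i \<preceq> e \<Longrightarrow> m x i \<preceq> x"
  using comp_mono_right[of i e x] by simp

lemma comp_le_of_le_id': "i \<preceq> e \<Longrightarrow> m i x \<preceq> x"
  using comp_mono_left[of i e x] by simp

lemma top_comp_top_comp_id: "i \<preceq> e \<Longrightarrow> m T (m T i) = m T i"
proof -
  assume "i \<preceq> e"
  then have "v i \<sqinter> e = v i" by (metis conv_id conv_le_iff meet_absorb)
  then have "m (m (v i) T) T = m (v i) T" using weak_assoc[of "v i"] by simp
  then have "v (m (m (v i) T) T) = v (m (v i) T)" by simp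
  then show ?thesis by (simp add: conv_comp)
qed

lemma comp_top_top_of_le_id: "i \<preceq> e \<Longrightarrow> m (m i T) T = m i T"
  using weak_assoc[of i] meet_absorb by simp

lemma idatom_right_unit_ex: "atom a \<Longrightarrow> \<exists>i. idatom i \<and> a \<preceq> m a i"
proof -
  assume a: "atom a"
  then have "m a e \<sqinter> a \<noteq> Z" using atom_le_iff[OF a, of a] by simp
  then have "m (v a) a \<sqinter> e \<noteq> Z" using schroeder_conv_left by metis
  then obtain i where i: "atom i" "i \<preceq> m (v a) a \<sqinter> e" using atom_below by blast
  then have "i \<preceq> e" "i \<preceq> m (v a) a" using meet_le meet_le' le_trans by blast+
  then show ?thesis using i a atom_le_comp_conv_left conv_atom by metis
qed

lemma conv_idatom: "idatom i \<Longrightarrow> v i = i"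
proof -
  assume i: "idatom i"
  then obtain j where j: "idatom j" "i \<preceq> m i j" using idatom_right_unit_ex by blast
  then have "i \<preceq> j" using comp_le_of_le_id' i le_trans by blast
  then have "i \<preceq> m i i" using j atom_eqI i by metis
  then have "i \<preceq> m i (v i)" using atom_le_comp_conv_right i by blast
  then have "i \<preceq> v i" using comp_le_of_le_id' i le_trans by blast
  then show ?thesis using atom_eqI i conv_atom by metis
qed

lemma comp_top_idatoms_distinct: "idatom i \<Longrightarrow> idatom j \<Longrightarrow> i \<noteq> j \<Longrightarrow> m (m T i) j = Z"
proof -
  assume i: "idatom i" and j: "idatom j" and "i \<noteq> j"
  have "m i j \<preceq> i \<sqinter> j" using comp_le_of_le_id comp_le_of_le_id' i j by (simp add: le_meet)
  moreover have "i \<sqinter> j = Z" using atom_le_iff atom_eqI i j \<open>i \<noteq> j\<close> by metis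
  ultimately have "m i j \<sqinter> T = Z" by (simp add: le_bot_iff)
  then have "m i T \<sqinter> j = Z" using schroeder_conv_left conv_idatom i by metis
  then have "m (m i T) T \<sqinter> j = Z" using comp_top_top_of_le_id i by simp
  then have "m (v (m T i)) T \<sqinter> j = Z" using conv_idatom i by (simp add: conv_comp)
  then show ?thesis using schroeder_conv_left by (metis meet_top)
qed

lemma idatom_unique_right_unit:
  assumes "atom a" "idatom i" "idatom j" "a \<preceq> m T i" "a \<preceq> m a j"
  shows "j = i"
proof (rule ccontr)
  assume "j \<noteq> i"
  have "a \<preceq> m a j" by fact
  also have "\<dots> \<preceq> m (m T i) j" using assms(4) by (rule comp_mono_left)
  also have "\<dots> = Z" using comp_top_idatoms_distinct assms(2,3) \<open>j \<noteq> i\<close> by blast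
  finally show False using assms(1) atom_neq_bot le_bot_iff by blast
qed

lemma le_comp_top: "a \<preceq> m a i \<Longrightarrow> a \<preceq> m T i"
  using comp_mono_left[of a T i] le_top le_trans by blast

(* Junk for non-atoms. *)
definition ran_id :: "'a \<Rightarrow> 'a" where
  "ran_id a = (THE i. idatom i \<and> a \<preceq> m a i)"

definition dom_id :: "'a \<Rightarrow> 'a" where
  "dom_id a = ran_id (v a)"

lemma ran_id: "atom a \<Longrightarrow> idatom (ran_id a) \<and> a \<preceq> m a (ran_id a)"
proof -
  assume a: "atom a"
  then obtain i where i: "idatom i" "a \<preceq> m a i" using idatom_right_unit_ex by blast
  have "j = i" if "idatom j \<and> a \<preceq> m a j" for j
    using idatom_unique_right_unit a i le_comp_top that by blast
  then show ?thesis unfolding ran_id_def using theI[of "\<lambda>i. idatom i \<and> a \<preceq> m a i" i] i by blast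
qed

lemma ran_id_eq: "atom a \<Longrightarrow> idatom i \<Longrightarrow> a \<preceq> m T i \<Longrightarrow> ran_id a = i"
  using idatom_unique_right_unit ran_id by blast

lemma dom_id: "atom a \<Longrightarrow> idatom (dom_id a) \<and> a \<preceq> m (dom_id a) a"
proof -
  assume "atom a"
  then have i: "idatom (dom_id a)" "v a \<preceq> m (v a) (dom_id a)"
    unfolding dom_id_def using ran_id conv_atom by blast+
  from i(2) have "v (v a) \<preceq> v (m (v a) (dom_id a))" by (rule conv_mono)
  then show ?thesis using i(1) conv_idatom by (simp add: conv_comp)
qed

lemma dom_id_eq: "atom a \<Longrightarrow> idatom i \<Longrightarrow> a \<preceq> m i T \<Longrightarrow> dom_id a = i"
proof -
  assume a: "atom a" and i: "idatom i" and "a \<preceq> m i T"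
  from this(3) have "v a \<preceq> v (m i T)" by (rule conv_mono)
  then have "v a \<preceq> m T i" using conv_idatom i by (simp add: conv_comp)
  then show ?thesis unfolding dom_id_def using ran_id_eq conv_atom a i by blast
qed

lemma ran_id_idatom: "idatom i \<Longrightarrow> ran_id i = i"
  using ran_id_eq comp_mono_left[of e T i] by simp

lemma dom_id_idatom: "idatom i \<Longrightarrow> dom_id i = i"
  unfolding dom_id_def using conv_idatom ran_id_idatom by simp

lemma ran_id_of_le_comp:
  assumes "atom a" "atom b" "b \<preceq> m c a"
  shows "ran_id b = ran_id a"
proof -
  have "b \<preceq> m c (m T (ran_id a))"
    using assms(3) comp_mono_right le_comp_top ran_id assms(1) le_trans by blast
  also have "\<dots> \<preceq> m T (m T (ran_id a))" by (rule comp_mono_left) simp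
  also have "\<dots> = m T (ran_id a)" using top_comp_top_comp_id ran_id assms(1) by blast
  finally show ?thesis using ran_id_eq ran_id assms by blast
qed

lemma dom_id_of_le_comp:
  assumes "atom b" "atom c" "b \<preceq> m c a"
  shows "dom_id b = dom_id c"
proof -
  have "c \<preceq> m (dom_id c) T"
    using dom_id assms(2) comp_mono_right[of c T] le_top le_trans by blast
  then have "b \<preceq> m (m (dom_id c) T) a" using assms(3) comp_mono_left le_trans by blast
  also have "\<dots> \<preceq> m (m (dom_id c) T) T" by (rule comp_mono_right) simp
  also have "\<dots> = m (dom_id c) T" using comp_top_top_of_le_id dom_id assms(2) by blast
  finally show ?thesis using dom_id_eq dom_id assms by blast
qed

lemma ran_id_eq_dom_id_of_le_comp:
  assumes "atom a" "atom b" "atom c" "b \<preceq> m c a"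
  shows "ran_id c = dom_id a"
proof -
  have "c \<preceq> m b (v a)" using assms atom_le_comp_conv_right by blast
  then show ?thesis unfolding dom_id_def using ran_id_of_le_comp assms conv_atom by blast
qed

abbreviation B where "B \<equiv> suitB p n m e"

lemma suitB_iff: "(a, b, c) \<in> B \<longleftrightarrow> atom a \<and> atom b \<and> atom c \<and> b \<preceq> m c a"
proof -
  have "(\<forall>k<(3::nat). P k) \<longleftrightarrow> P 0 \<and> P 1 \<and> P 2" for P using less_3_cases by fastforce
  then show ?thesis unfolding suitB_def by simp
qed

lemma suitB_atom: "s \<in> B \<Longrightarrow> k < 3 \<Longrightarrow> atom (sel s k)"
  unfolding suitB_def by blast

lemma suitB_ids:
  assumes "(a, b, c) \<in> B"
  shows "ran_id b = ran_id a" "dom_id b = dom_id c" "ran_id c = dom_id a"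
  using assms ran_id_of_le_comp dom_id_of_le_comp ran_id_eq_dom_id_of_le_comp
  unfolding suitB_iff by blast+

lemma suitB_idatom_fst_iff: "idatom i \<Longrightarrow> (i, b, c) \<in> B \<longleftrightarrow> atom b \<and> c = b \<and> ran_id b = i"
proof
  assume "idatom i" "(i, b, c) \<in> B"
  then have "atom b" "atom c" "b \<preceq> m c i" by (auto simp: suitB_iff)
  moreover have "m c i \<preceq> c" using \<open>idatom i\<close> comp_le_of_le_id by blast
  ultimately have "c = b" using atom_eqI le_trans by metis
  moreover have "ran_id b = i" using suitB_ids(1) \<open>(i, b, c) \<in> B\<close> ran_id_idatom \<open>idatom i\<close> by metis
  ultimately show "atom b \<and> c = b \<and> ran_id b = i" using \<open>atom b\<close> by blast
next
  assume "idatom i" "atom b \<and> c = b \<and> ran_id b = i"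
  then show "(i, b, c) \<in> B" using ran_id by (auto simp: suitB_iff)
qed

lemma suitB_idatom_snd_iff: "idatom i \<Longrightarrow> (a, i, c) \<in> B \<longleftrightarrow> atom a \<and> c = v a \<and> ran_id a = i"
proof
  assume "idatom i" "(a, i, c) \<in> B"
  then have "atom a" "atom c" "i \<preceq> m c a" by (auto simp: suitB_iff)
  then have "c \<preceq> m i (v a)" using atom_le_comp_conv_right \<open>idatom i\<close> by blast
  also have "\<dots> \<preceq> v a" using \<open>idatom i\<close> comp_le_of_le_id' by blast
  finally have "c = v a" using atom_eqI conv_atom \<open>atom a\<close> \<open>atom c\<close> by blast
  moreover have "ran_id a = i" using suitB_ids(1) \<open>(a, i, c) \<in> B\<close> ran_id_idatom \<open>idatom i\<close> by metis
  ultimately show "atom a \<and> c = v a \<and> ran_id a = i" using \<open>atom a\<close> by blast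
next
  assume i: "idatom i" and "atom a \<and> c = v a \<and> ran_id a = i"
  then have "atom a" "c = v a" "a \<preceq> m a i" using ran_id by auto
  then have "i \<preceq> m (v a) a" using atom_le_comp_conv_left i by blast
  then show "(a, i, c) \<in> B" using i \<open>atom a\<close> \<open>c = v a\<close> conv_atom by (auto simp: suitB_iff)
qed

lemma suitB_idatom_thd_iff: "idatom i \<Longrightarrow> (a, b, i) \<in> B \<longleftrightarrow> atom a \<and> b = a \<and> dom_id a = i"
proof
  assume "idatom i" "(a, b, i) \<in> B"
  then have "atom a" "atom b" "b \<preceq> m i a" by (auto simp: suitB_iff)
  moreover have "m i a \<preceq> a" using \<open>idatom i\<close> comp_le_of_le_id' by blast
  ultimately have "b = a" using atom_eqI le_trans by metis
  moreover have "dom_id b = i" using suitB_ids(2) \<open>(a, b, i) \<in> B\<close> dom_id_idatom \<open>idatom i\<close> by metis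
  ultimately show "atom a \<and> b = a \<and> dom_id a = i" using \<open>atom a\<close> by blast
next
  assume "idatom i" "atom a \<and> b = a \<and> dom_id a = i"
  then show "(a, b, i) \<in> B" using dom_id by (auto simp: suitB_iff)
qed

lemma suitB_eq_of_idatom:
  assumes "s \<in> B" "t \<in> B" "j < 3" "k < 3" "j \<noteq> k"
    and "sel s j \<preceq> e" "sel t j \<preceq> e" "sel s k = sel t k"
  shows "s = t"
proof -
  obtain a b c a' b' c' where st: "s = (a, b, c)" "t = (a', b', c')" by (cases s, cases t) auto
  then have atoms: "atom a" "atom b" "atom c" "atom a'" "atom b'" "atom c'"
    using assms(1,2) by (auto simp: suitB_iff)
  consider "j = 0" | "j = 1" | "j = 2" using less_3_cases assms(3) by blast
  then show ?thesis
  proof cases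
    case 1
    then have "c = b" "ran_id b = a" "c' = b'" "ran_id b' = a'"
      using assms st atoms suitB_idatom_fst_iff by auto
    moreover have "b = b'" using less_3_cases[OF assms(4)] assms(5,8) 1 st calculation by auto
    ultimately show ?thesis using st by simp
  next
    case 2
    then have "c = v a" "ran_id a = b" "c' = v a'" "ran_id a' = b'"
      using assms st atoms suitB_idatom_snd_iff by auto
    moreover have "a = a'" using less_3_cases[OF assms(4)] assms(5,8) 2 st calculation by auto
    ultimately show ?thesis using st by simp
  next
    case 3
    then have "b = a" "dom_id a = c" "b' = a'" "dom_id a' = c'"
      using assms st atoms suitB_idatom_thd_iff by auto
    moreover have "a = a'" using less_3_cases[OF assms(4)] assms(5,8) 3 st calculation by auto
    ultimately show ?thesis using st by simp
  qed
qed

lemma suitB_idatom_ex: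
  assumes "atom a" "j < 3" "l < 3" "j \<noteq> l"
  shows "\<exists>t\<in>B. sel t l = a \<and> sel t j \<preceq> e"
proof -
  have "(ran_id a, a, a) \<in> B" "(a, a, dom_id a) \<in> B" "(a, ran_id a, v a) \<in> B"
    "(v a, dom_id a, a) \<in> B"
    using assms(1) ran_id dom_id conv_atom suitB_idatom_fst_iff suitB_idatom_snd_iff
      suitB_idatom_thd_iff unfolding dom_id_def by auto
  then show ?thesis using assms ran_id dom_id less_3_cases
    by (smt (verit) sel_simps)
qed

lemma suitB_idatom_pair:
  assumes "s \<in> B" "j < 3" "k < 3" "j \<noteq> k" "sel s j \<preceq> e" "sel s k \<preceq> e" "l < 3"
  shows "sel s l \<preceq> e"
proof -
  obtain a b c where s: "s = (a, b, c)" by (cases s) auto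
  then have atoms: "atom a" "atom b" "atom c" using assms(1) by (auto simp: suitB_iff)
  have "a \<preceq> e \<Longrightarrow> c = b" using assms(1) s atoms suitB_idatom_fst_iff by blast
  moreover have "b \<preceq> e \<Longrightarrow> a = v c" using assms(1) s atoms suitB_idatom_snd_iff by auto
  moreover have "c \<preceq> e \<Longrightarrow> b = a" using assms(1) s atoms suitB_idatom_thd_iff by blast
  ultimately show ?thesis using assms s less_3_cases conv_le_iff conv_id by (smt (verit) sel_simps)
qed

(* The identity atom sel y k sits at the vertex shared by the edges k and l; it is passed
   on from y to z along edge l and from z to x along edge k. *)
lemma suitB_glue:
  assumes "k < 3" "l < 3" "k \<noteq> l" and "y \<in> B" "sel y k \<preceq> e"
    and "z \<in> B" "sel z l = sel y l" and "x \<in> B" "sel x k = sel z k"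
  shows "\<exists>w\<in>B. sel w k = sel y k \<and> sel w l = sel x l"
proof -
  obtain y0 y1 y2 where y: "y = (y0, y1, y2)" by (cases y) auto
  obtain z0 z1 z2 where z: "z = (z0, z1, z2)" by (cases z) auto
  obtain x0 x1 x2 where x: "x = (x0, x1, x2)" by (cases x) auto
  have atoms: "atom y0" "atom y1" "atom y2" "atom x0" "atom x1" "atom x2"
    using assms(4,8) x y by (auto simp: suitB_iff)
  note ids = suitB_ids[of z0 z1 z2] suitB_ids[of x0 x1 x2]
  consider "k = 0" "l = 1" | "k = 0" "l = 2" | "k = 1" "l = 0" | "k = 1" "l = 2"
    | "k = 2" "l = 0" | "k = 2" "l = 1"
    using assms(1-3) less_3_cases by metis
  then show ?thesis
  proof cases
    case 1
    then have "y2 = y1" "ran_id y1 = y0" using assms(4,5) y atoms suitB_idatom_fst_iff by auto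
    then have "(y0, x1, x1) \<in> B" using 1 assms x y z ids atoms suitB_idatom_fst_iff by auto
    then show ?thesis using 1 x y by force
  next
    case 2
    then have "y2 = y1" "ran_id y1 = y0" using assms(4,5) y atoms suitB_idatom_fst_iff by auto
    then have "(y0, x2, x2) \<in> B" using 2 assms x y z ids atoms suitB_idatom_fst_iff by auto
    then show ?thesis using 2 x y by force
  next
    case 3
    then have "y2 = v y0" "ran_id y0 = y1" using assms(4,5) y atoms suitB_idatom_snd_iff by auto
    then have "(x0, y1, v x0) \<in> B" using 3 assms x y z ids atoms suitB_idatom_snd_iff by auto
    then show ?thesis using 3 x y by force
  next
    case 4
    then have "y2 = v y0" "ran_id y0 = y1" using assms(4,5) y atoms suitB_idatom_snd_iff by auto
    then have "(v x2, y1, x2) \<in> B"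
      using 4 assms x y z ids atoms conv_atom suitB_idatom_snd_iff unfolding dom_id_def by auto
    then show ?thesis using 4 x y by force
  next
    case 5
    then have "y1 = y0" "dom_id y0 = y2" using assms(4,5) y atoms suitB_idatom_thd_iff by auto
    then have "(x0, x0, y2) \<in> B" using 5 assms x y z ids atoms suitB_idatom_thd_iff by auto
    then show ?thesis using 5 x y by force
  next
    case 6
    then have "y1 = y0" "dom_id y0 = y2" using assms(4,5) y atoms suitB_idatom_thd_iff by auto
    then have "(x1, x1, y2) \<in> B" using 6 assms x y z ids atoms suitB_idatom_thd_iff by auto
    then show ?thesis using 6 x y by force
  qed
qed

abbreviation cyl :: "nat \<Rightarrow> ('a \<times> 'a \<times> 'a) set \<Rightarrow> ('a \<times> 'a \<times> 'a) set" where
  "cyl k X \<equiv> Tstar B (suitT p n m e k) X"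

abbreviation diag :: "nat \<Rightarrow> nat \<Rightarrow> ('a \<times> 'a \<times> 'a) set" where
  "diag \<equiv> suitE p n m e"

lemma suitT_eq_kernel_on: "suitT p n m e k = kernel_on B (\<lambda>s. sel s k)"
  unfolding suitT_def kernel_on_def by simp

lemma cyl_iff: "y \<in> cyl k X \<longleftrightarrow> y \<in> B \<and> (\<exists>x\<in>X \<inter> B. sel y k = sel x k)"
  unfolding suitT_eq_kernel_on by (rule Tstar_kernel_on_iff)

lemma diag_same [simp]: "diag k k = B"
  unfolding suitE_def by simp

lemma diag_subset: "diag k l \<subseteq> B"
  unfolding suitE_def by auto

lemma diag_neq: "k \<noteq> l \<Longrightarrow> diag k l = {s \<in> B. sel s (3 - k - l) \<preceq> e}"
  unfolding suitE_def by simp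

lemma cyl_cyl_Int_diag_subset:
  assumes "k < 3" "l < 3" "\<mu> < 3" "\<mu> \<noteq> k" "\<mu> \<noteq> l"
  shows "cyl l (cyl k X) \<inter> diag l \<mu> \<subseteq> cyl k (cyl l X)"
proof (cases "k = l")
  case False
  then have "3 - l - \<mu> = k" using assms by arith
  show ?thesis
  proof
    fix y assume "y \<in> cyl l (cyl k X) \<inter> diag l \<mu>"
    then obtain z x where y: "y \<in> B" "sel y k \<preceq> e" and z: "z \<in> B" "sel y l = sel z l"
      and x: "x \<in> X" "x \<in> B" "sel z k = sel x k"
      using diag_neq[of l \<mu>] assms \<open>3 - l - \<mu> = k\<close> cyl_iff by auto
    obtain w where w: "w \<in> B" "sel w k = sel y k" "sel w l = sel x l"
      using suitB_glue[of k l y z x] assms False y z x by auto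
    then have "w \<in> cyl l X" using x cyl_iff by auto
    then show "y \<in> cyl k (cyl l X)"
      unfolding cyl_iff[of y k] using w y by (intro conjI bexI[of _ w]) auto
  qed
qed simp

lemma diag_eq_cyl:
  assumes "k < 3" "l < 3" "\<mu> < 3" "l \<noteq> k" "l \<noteq> \<mu>"
  shows "diag k \<mu> = cyl l (diag k l \<inter> diag l \<mu>)"
proof (cases "k = \<mu>")
  case True
  have "B \<subseteq> cyl l (diag k l)"
  proof
    fix s assume "s \<in> B"
    then have "atom (sel s l)" using assms(2) by (rule suitB_atom)
    moreover have "3 - k - l < 3" "3 - k - l \<noteq> l" using assms by arith+
    ultimately obtain t where "t \<in> B" "sel t l = sel s l" "sel t (3 - k - l) \<preceq> e"
      using suitB_idatom_ex[of "sel s l" "3 - k - l" l] assms(2) by blast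
    then show "s \<in> cyl l (diag k l)"
      unfolding cyl_iff[of s l] using \<open>s \<in> B\<close> diag_neq[of k l] assms(4)
      by (intro conjI bexI[of _ t]) auto
  qed
  moreover have "cyl l (diag k l) \<subseteq> B" by (rule Tstar_subset)
  moreover have "diag l k = diag k l" unfolding suitE_def by (simp add: add.commute)
  ultimately show ?thesis using True by auto
next
  case False
  have idx: "3 - k - \<mu> = l" "3 - k - l = \<mu>" "3 - l - \<mu> = k" using assms False by arith+
  show ?thesis
  proof (rule set_eqI)
    fix s
    show "s \<in> diag k \<mu> \<longleftrightarrow> s \<in> cyl l (diag k l \<inter> diag l \<mu>)"
    proof
      assume "s \<in> diag k \<mu>"
      then have s: "s \<in> B" "sel s l \<preceq> e" using diag_neq[OF False] idx by auto
      then have "(sel s l, sel s l, sel s l) \<in> B"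
        using assms(2) suitB_atom suitB_idatom_fst_iff ran_id_idatom by auto
      moreover have "(sel s l, sel s l, sel s l) \<in> diag k l \<inter> diag l \<mu>"
        using calculation s(2) diag_neq assms idx by auto
      ultimately show "s \<in> cyl l (diag k l \<inter> diag l \<mu>)"
        unfolding cyl_iff[of s l] using s by (intro conjI bexI[of _ "(sel s l, sel s l, sel s l)"]) auto
    next
      assume "s \<in> cyl l (diag k l \<inter> diag l \<mu>)"
      then obtain x where s: "s \<in> B" and x: "x \<in> B" "sel s l = sel x l" "sel x \<mu> \<preceq> e" "sel x k \<preceq> e"
        using cyl_iff diag_neq assms idx by auto
      then have "sel x l \<preceq> e" using suitB_idatom_pair[of x k \<mu> l] assms False by auto
      then show "s \<in> diag k \<mu>" using diag_neq[OF False] idx s x by auto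
    qed
  qed
qed

lemma cyl_diag_disjoint:
  assumes "k < 3" "l < 3" "k \<noteq> l"
  shows "cyl k (diag k l \<inter> X) \<inter> cyl k (diag k l \<inter> (B - X)) = {}"
proof (rule ccontr)
  assume "\<not> ?thesis"
  then obtain s t where s: "s \<in> B" "sel s (3 - k - l) \<preceq> e" "s \<in> X"
    and t: "t \<in> B" "sel t (3 - k - l) \<preceq> e" "t \<notin> X" and "sel s k = sel t k"
    using cyl_iff diag_neq[OF assms(3)] by auto
  moreover have "3 - k - l < 3" "3 - k - l \<noteq> k" using assms by arith+
  ultimately have "s = t" using suitB_eq_of_idatom[of s t "3 - k - l" k] assms(1) by blast
  then show False using s t by simp
qed

end

theorem lemma5:
  fixes p :: "'a \<Rightarrow> 'a \<Rightarrow> 'a" and n :: "'a \<Rightarrow> 'a" and m :: "'a \<Rightarrow> 'a \<Rightarrow> 'a"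
    and v :: "'a \<Rightarrow> 'a" and e :: 'a
  assumes "WA p n m v e" and "ra_atomic p n e"
  shows "NA3 (Pow (suitB p n m e)) (\<union>) (\<inter>) (\<lambda>X. suitB p n m e - X) {} (suitB p n m e)
           (\<lambda>k X. Tstar (suitB p n m e) (suitT p n m e k) X) (suitE p n m e)"
proof -
  interpret atomic_wa p n m v e using assms by unfold_locales
  have "X \<subseteq> B \<Longrightarrow> X \<inter> cyl k X = X" for k X
    unfolding suitT_eq_kernel_on using subset_Tstar_kernel_on by blast
  moreover have "cyl k (X \<inter> cyl k Y) = cyl k X \<inter> cyl k Y" for k X Y
    unfolding suitT_eq_kernel_on by (rule Tstar_kernel_on_Int)
  moreover have "cyl l (cyl k X) \<inter> diag l \<mu> \<inter> cyl k (cyl l X) = cyl l (cyl k X) \<inter> diag l \<mu>"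
    if "k < 3" "l < 3" "\<mu> < 3" "\<mu> \<noteq> k \<and> \<mu> \<noteq> l" for k l \<mu> X
    using cyl_cyl_Int_diag_subset that by blast
  ultimately show ?thesis
    unfolding NA3_def using bool_alg_Pow diag_eq_cyl cyl_diag_disjoint
    by (simp add: Tstar_subset Tstar_empty diag_subset)
qed

end
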